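(* Let $\mathcal G$ be a core network with input nodes $\iota_1,\dots,\iota_n$ and output node $o$, let $\rho_k>\rho_{k+1}$ be adjacent absolutely super-simple nodes, and let $\mathcal B_i$ be an $\mathcal A_{\mathcal G}$-path component. Suppose there is $m$ and an $\iota_mo$-simple path $S_m$ such that nodes in $\mathcal B_i$ are $CS_m$-path equivalent to an absolutely simple node $\rho$ in $CS_m\setminus\mathcal B_i$ which belongs to $\mathcal L(\rho_k,\rho_{k+1})$. Then: (a) the nodes in $CS_m\setminus\mathcal B_i$ that are $CS_m$-path equivalent to $\mathcal B_i$ and are not absolutely appendage (including $\rho$) are absolutely simple nodes contained in $\mathcal L(\rho_k,\rho_{k+1})$, and none of them is absolutely super-simple; (b) for every $j=1,\dots,n$ there is an $\iota_jo$-simple path $S_j$ such that nodes in $\mathcal B_i$ are $CS_j$-path equivalent to $\rho$ in $CS_j\setminus\mathcal B_i$; (c) if $\tilde S_m$ is another $\iota_mo$-simple path such that nodes in $\mathcal B_i$ are $C\tilde S_m$-path equivalent to nodes in $C\tilde S_m\setminus\mathcal B_i$, then there is an absolutely simple node $\tau$ between $\rho_k$ and $\rho_{k+1}$ which is $C\tilde S_m$-path equivalent to $\mathcal B_i$.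
   Context: Node $b$ is downstream from $a$ if there is a directed path from $a$ to $b$. A core network: every node is upstream from $o$ and downstream from at least one input node. A simple path visits each node at most once; an $\iota_mo$-simple path is a simple path from $\iota_m$ to $o$. A node is $\iota_m$-simple if it lies on an $\iota_mo$-simple path, $\iota_m$-appendage if downstream from $\iota_m$ but not $\iota_m$-simple; absolutely simple (resp. absolutely appendage) if $\iota_m$-simple (resp. $\iota_m$-appendage) for every $m$. Absolutely super-simple: lies on every $\iota_mo$-simple path for every $m$; these are totally ordered $\rho_1>\cdots>\rho_p>o$ ($a>b$ iff $b$ comes after $a$ on every $\iota_mo$-simple path for every $m$); adjacent means consecutive. An absolutely simple node $\rho$ is between adjacent $\rho_k>\rho_{k+1}$ if for some $m$ some $\iota_mo$-simple path visits $\rho_k,\rho,\rho_{k+1}$ in that order; $\mathcal L(\rho_k,\rho_{k+1})$ is the subnetwork of absolutely simple nodes between them. $\mathcal A_{\mathcal G}$: all absolutely appendage nodes with arrows of $\mathcal G$ between them. For a subnetwork $\mathcal K$, nodes are $\mathcal K$-path equivalent if joined by directed paths inside $\mathcal K$ in both directions; a $\mathcal K$-path component is an equivalence class. For an $\iota_mo$-simple path $S$, $CS$ is the subnetwork of nodes of $\mathcal G$ not on $S$ with all arrows of $\mathcal G$ between them. *)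

theory Defs
  imports Main
begin

definition io_network :: "'v set \<Rightarrow> ('v \<times> 'v) set \<Rightarrow> (nat \<Rightarrow> 'v) \<Rightarrow> nat \<Rightarrow> 'v \<Rightarrow> bool" where
  "io_network V E \<iota> n out \<longleftrightarrow> finite V \<and> E \<subseteq> V \<times> V \<and> n \<ge> 1 \<and>
     inj_on \<iota> {1..n} \<and> \<iota> ` {1..n} \<subseteq> V \<and> out \<in> V \<and> out \<notin> \<iota> ` {1..n}"

definition downstream :: "('v \<times> 'v) set \<Rightarrow> 'v \<Rightarrow> 'v \<Rightarrow> bool" where
  "downstream E a b \<longleftrightarrow> (a, b) \<in> E\<^sup>*"

definition core_network :: "'v set \<Rightarrow> ('v \<times> 'v) set \<Rightarrow> (nat \<Rightarrow> 'v) \<Rightarrow> nat \<Rightarrow> 'v \<Rightarrow> bool" where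
  "core_network V E \<iota> n out \<longleftrightarrow> io_network V E \<iota> n out \<and>
     (\<forall>v\<in>V. downstream E v out \<and> (\<exists>m\<in>{1..n}. downstream E (\<iota> m) v))"

definition is_path :: "'v set \<Rightarrow> ('v \<times> 'v) set \<Rightarrow> 'v list \<Rightarrow> bool" where
  "is_path V E xs \<longleftrightarrow> xs \<noteq> [] \<and> set xs \<subseteq> V \<and>
     (\<forall>i. Suc i < length xs \<longrightarrow> (xs ! i, xs ! Suc i) \<in> E)"

definition simple_path :: "'v set \<Rightarrow> ('v \<times> 'v) set \<Rightarrow> 'v list \<Rightarrow> bool" where
  "simple_path V E xs \<longleftrightarrow> is_path V E xs \<and> distinct xs"

definition io_simple_path :: "'v set \<Rightarrow> ('v \<times> 'v) set \<Rightarrow> (nat \<Rightarrow> 'v) \<Rightarrow> 'v \<Rightarrow> nat \<Rightarrow> 'v list \<Rightarrow> bool" where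
  "io_simple_path V E \<iota> out m S \<longleftrightarrow> simple_path V E S \<and> hd S = \<iota> m \<and> last S = out"

definition input_simple :: "'v set \<Rightarrow> ('v \<times> 'v) set \<Rightarrow> (nat \<Rightarrow> 'v) \<Rightarrow> 'v \<Rightarrow> nat \<Rightarrow> 'v \<Rightarrow> bool" where
  "input_simple V E \<iota> out m v \<longleftrightarrow> (\<exists>S. io_simple_path V E \<iota> out m S \<and> v \<in> set S)"

definition input_appendage :: "'v set \<Rightarrow> ('v \<times> 'v) set \<Rightarrow> (nat \<Rightarrow> 'v) \<Rightarrow> 'v \<Rightarrow> nat \<Rightarrow> 'v \<Rightarrow> bool" where
  "input_appendage V E \<iota> out m v \<longleftrightarrow> v \<in> V \<and> downstream E (\<iota> m) v \<and> \<not> input_simple V E \<iota> out m v"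

definition abs_simple :: "'v set \<Rightarrow> ('v \<times> 'v) set \<Rightarrow> (nat \<Rightarrow> 'v) \<Rightarrow> nat \<Rightarrow> 'v \<Rightarrow> 'v \<Rightarrow> bool" where
  "abs_simple V E \<iota> n out v \<longleftrightarrow> (\<forall>m\<in>{1..n}. input_simple V E \<iota> out m v)"

definition abs_appendage :: "'v set \<Rightarrow> ('v \<times> 'v) set \<Rightarrow> (nat \<Rightarrow> 'v) \<Rightarrow> nat \<Rightarrow> 'v \<Rightarrow> 'v \<Rightarrow> bool" where
  "abs_appendage V E \<iota> n out v \<longleftrightarrow> (\<forall>m\<in>{1..n}. input_appendage V E \<iota> out m v)"

definition abs_super_simple :: "'v set \<Rightarrow> ('v \<times> 'v) set \<Rightarrow> (nat \<Rightarrow> 'v) \<Rightarrow> nat \<Rightarrow> 'v \<Rightarrow> 'v \<Rightarrow> bool" where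
  "abs_super_simple V E \<iota> n out v \<longleftrightarrow> v \<in> V \<and>
     (\<forall>m\<in>{1..n}. \<forall>S. io_simple_path V E \<iota> out m S \<longrightarrow> v \<in> set S)"

definition ss_greater :: "'v set \<Rightarrow> ('v \<times> 'v) set \<Rightarrow> (nat \<Rightarrow> 'v) \<Rightarrow> nat \<Rightarrow> 'v \<Rightarrow> 'v \<Rightarrow> 'v \<Rightarrow> bool" where
  "ss_greater V E \<iota> n out a b \<longleftrightarrow>
     (\<forall>m\<in>{1..n}. \<forall>S. io_simple_path V E \<iota> out m S \<longrightarrow>
        (\<exists>i j. i < j \<and> j < length S \<and> S ! i = a \<and> S ! j = b))"

definition adjacent_ss :: "'v set \<Rightarrow> ('v \<times> 'v) set \<Rightarrow> (nat \<Rightarrow> 'v) \<Rightarrow> nat \<Rightarrow> 'v \<Rightarrow> 'v \<Rightarrow> 'v \<Rightarrow> bool" where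
  "adjacent_ss V E \<iota> n out a b \<longleftrightarrow>
     abs_super_simple V E \<iota> n out a \<and> abs_super_simple V E \<iota> n out b \<and> ss_greater V E \<iota> n out a b \<and>
     \<not> (\<exists>c. abs_super_simple V E \<iota> n out c \<and> ss_greater V E \<iota> n out a c \<and> ss_greater V E \<iota> n out c b)"

definition between :: "'v set \<Rightarrow> ('v \<times> 'v) set \<Rightarrow> (nat \<Rightarrow> 'v) \<Rightarrow> nat \<Rightarrow> 'v \<Rightarrow> 'v \<Rightarrow> 'v \<Rightarrow> 'v \<Rightarrow> bool" where
  "between V E \<iota> n out a b v \<longleftrightarrow> abs_simple V E \<iota> n out v \<and>
     (\<exists>m\<in>{1..n}. \<exists>S. io_simple_path V E \<iota> out m S \<and>
        (\<exists>i j l. i < j \<and> j < l \<and> l < length S \<and> S ! i = a \<and> S ! j = v \<and> S ! l = b))"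

definition L_nodes :: "'v set \<Rightarrow> ('v \<times> 'v) set \<Rightarrow> (nat \<Rightarrow> 'v) \<Rightarrow> nat \<Rightarrow> 'v \<Rightarrow> 'v \<Rightarrow> 'v \<Rightarrow> 'v set" where
  "L_nodes V E \<iota> n out a b = {v. between V E \<iota> n out a b v}"

text \<open>Node set of A_G (with all arrows of G between them, i.e. induced subnetwork).\<close>
definition A_nodes :: "'v set \<Rightarrow> ('v \<times> 'v) set \<Rightarrow> (nat \<Rightarrow> 'v) \<Rightarrow> nat \<Rightarrow> 'v \<Rightarrow> 'v set" where
  "A_nodes V E \<iota> n out = {v. abs_appendage V E \<iota> n out v}"

definition path_equiv :: "('v \<times> 'v) set \<Rightarrow> 'v set \<Rightarrow> 'v \<Rightarrow> 'v \<Rightarrow> bool" where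
  "path_equiv E K x y \<longleftrightarrow> x \<in> K \<and> y \<in> K \<and>
     (x, y) \<in> (E \<inter> (K \<times> K))\<^sup>* \<and> (y, x) \<in> (E \<inter> (K \<times> K))\<^sup>*"

definition path_component :: "('v \<times> 'v) set \<Rightarrow> 'v set \<Rightarrow> 'v set \<Rightarrow> bool" where
  "path_component E K B \<longleftrightarrow> (\<exists>x\<in>K. B = {y. path_equiv E K x y})"

text \<open>Node set of CS: nodes of G not on S (induced subnetwork).\<close>
definition C_nodes :: "'v set \<Rightarrow> 'v list \<Rightarrow> 'v set" where
  "C_nodes V S = V - set S"

end

theory Submission
  imports Defs "HOL-Library.Transitive_Closure_Table"
begin

(* Adjacent super-simple nodes rho_k > rho_(k+1) act as a dominator and a postdominator: a node
   strictly between them on an input-output simple path can be reached from an input only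
   through rho_k, and can reach o only through rho_(k+1).  Both properties are preserved along
   walks avoiding rho_k and rho_(k+1), in particular along walks inside CS for any
   input-output simple path S; so they hold on the whole CS_m-class of B.  Conversely, a
   non-appendage node with both properties lies after rho_k and before rho_(k+1) on some simple
   path, and replacing the part of that path before rho_k by the part before rho_k of a simple
   path from any other input (the two pieces are disjoint, since every input-output walk meets
   rho_k) shows that it is absolutely simple.  This gives (a).  The same exchange applied to S_m
   produces, for every input, a simple path missing the CS_m-class of rho, which gives (b).  For
   (c), the class of B in the complement of the other path cannot stay inside A_G, because B is
   a whole A_G-path component; a node where it leaves A_G lies between rho_k and rho_(k+1) as
   in (a). *)

lemma rtrancl_induced_mono: "A \<subseteq> B \<Longrightarrow> (E \<inter> A \<times> A)\<^sup>* \<subseteq> (E \<inter> B \<times> B)\<^sup>*"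
  by (rule rtrancl_mono) blast

lemma is_path_Cons:
  "is_path V E (x # xs) \<longleftrightarrow> x \<in> V \<and> (xs \<noteq> [] \<longrightarrow> (x, hd xs) \<in> E \<and> is_path V E xs)"
  unfolding is_path_def by (auto simp: hd_conv_nth nth_Cons split: nat.splits)

lemma is_path_append:
  "is_path V E xs \<Longrightarrow> is_path V E ys \<Longrightarrow> (last xs, hd ys) \<in> E \<Longrightarrow> is_path V E (xs @ ys)"
proof (induction xs)
  case Nil
  then show ?case by (simp add: is_path_def)
next
  case (Cons x xs)
  then show ?case by (cases "xs = []") (auto simp: is_path_Cons)
qed

lemma is_path_take: "is_path V E xs \<Longrightarrow> 0 < k \<Longrightarrow> is_path V E (take k xs)"
  unfolding is_path_def by (auto dest: in_set_takeD)

lemma is_path_drop: "is_path V E xs \<Longrightarrow> k < length xs \<Longrightarrow> is_path V E (drop k xs)"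
  unfolding is_path_def by (auto dest: in_set_dropD)

lemma is_path_splice:
  assumes Q: "is_path V E Q" "i < length Q" and R: "is_path V E R" "a < length R"
    and "Q ! i = R ! a"
  shows "is_path V E (take i Q @ drop a R)"
proof (cases "i = 0")
  case True
  then show ?thesis using is_path_drop[OF R] by simp
next
  case False
  then have "Suc (i - 1) < length Q" using Q(2) by simp
  then have "(Q ! (i - 1), Q ! i) \<in> E" using Q(1) False unfolding is_path_def by fastforce
  moreover have "last (take i Q) = Q ! (i - 1)"
    using False Q(2) by (subst last_conv_nth) auto
  ultimately have "(last (take i Q), hd (drop a R)) \<in> E"
    using assms(5) R(2) by (simp add: hd_drop_conv_nth)
  then show ?thesis using is_path_append[OF is_path_take[OF Q(1)] is_path_drop[OF R]] False by simp
qed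

lemma is_path_nth_rtrancl:
  assumes "is_path V E xs" "i \<le> j" "j < length xs" "\<And>k. i \<le> k \<Longrightarrow> k \<le> j \<Longrightarrow> xs ! k \<in> A"
  shows "(xs ! i, xs ! j) \<in> (E \<inter> A \<times> A)\<^sup>*"
  using assms(2-4)
proof (induction j)
  case 0
  then show ?case by simp
next
  case (Suc j)
  show ?case
  proof (cases "i = Suc j")
    case False
    then have "(xs ! i, xs ! j) \<in> (E \<inter> A \<times> A)\<^sup>*" using Suc by simp
    moreover have "(xs ! j, xs ! Suc j) \<in> E \<inter> A \<times> A"
      using assms(1) Suc False unfolding is_path_def by auto
    ultimately show ?thesis by (rule rtrancl_into_rtrancl)
  qed simp
qed

lemma rtrancl_imp_simple_path:
  assumes "(a, b) \<in> (E \<inter> A \<times> A)\<^sup>*" "b \<in> A" "A \<subseteq> V"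
  obtains xs where "simple_path V E xs" "hd xs = a" "last xs = b" "set xs \<subseteq> A"
proof -
  let ?r = "\<lambda>u v. (u, v) \<in> E \<inter> A \<times> A"
  obtain ys where "rtrancl_path ?r a ys b"
    using assms(1) rtranclp_eq_rtrancl_path[of ?r a b] unfolding rtrancl_def by blast
  then obtain zs where zs: "rtrancl_path ?r a zs b" "distinct (a # zs)"
    by (rule rtrancl_path_distinct)
  have "last (a # zs) = b"
  proof (cases "zs = []")
    case True
    then show ?thesis using zs(1) by (auto elim: rtrancl_path.cases)
  qed (simp add: rtrancl_path_last[OF zs(1)])
  moreover have "a \<in> A"
    using zs(1) assms(2) by (cases rule: rtrancl_path.cases) auto
  moreover have "set zs \<subseteq> A"
    using rtrancl_path_Range[OF zs(1)] by blast
  moreover have "(\<forall>i. Suc i < length (a # zs) \<longrightarrow> ((a # zs) ! i, (a # zs) ! Suc i) \<in> E)"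
    using rtrancl_path_nth[OF zs(1)] by simp
  ultimately show ?thesis
    using that[of "a # zs"] zs(2) assms(3) unfolding simple_path_def is_path_def by auto
qed

lemma io_simple_pathD:
  assumes "io_simple_path V E \<iota> out j S"
  shows "is_path V E S" "distinct S" "set S \<subseteq> V" "S ! 0 = \<iota> j" "S ! (length S - 1) = out"
  using assms unfolding io_simple_path_def simple_path_def is_path_def
  by (auto simp: hd_conv_nth last_conv_nth)

abbreviation avoiding :: "('v \<times> 'v) set \<Rightarrow> 'v set \<Rightarrow> 'v \<Rightarrow> ('v \<times> 'v) set" where
  "avoiding E V s \<equiv> E \<inter> (V - {s}) \<times> (V - {s})"

lemma io_simple_path_nth_avoiding:
  assumes S: "io_simple_path V E \<iota> out j S" and "k < length S" "a < length S" "k \<noteq> a"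
  shows "S ! k \<in> V - {S ! a}"
  using io_simple_pathD(2,3)[OF S] assms(2-4) nth_eq_iff_index_eq[of S k a] nth_mem[of k S] by auto

lemma io_simple_path_prefix_avoiding:
  assumes S: "io_simple_path V E \<iota> out j S" and "a < length S" "S ! a = s" "c < a"
  shows "(\<iota> j, S ! c) \<in> (avoiding E V s)\<^sup>*"
proof -
  have "(S ! 0, S ! c) \<in> (avoiding E V s)\<^sup>*"
    using assms io_simple_path_nth_avoiding[OF S _ assms(2)]
    by (intro is_path_nth_rtrancl[OF io_simple_pathD(1)[OF S]]) auto
  then show ?thesis using io_simple_pathD(4)[OF S] by simp
qed

lemma io_simple_path_suffix_avoiding:
  assumes S: "io_simple_path V E \<iota> out j S" and "a < c" "c < length S" "S ! a = s"
  shows "(S ! c, out) \<in> (avoiding E V s)\<^sup>*"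
proof -
  have "(S ! c, S ! (length S - 1)) \<in> (avoiding E V s)\<^sup>*"
    using assms io_simple_path_nth_avoiding[OF S, of _ a]
    by (intro is_path_nth_rtrancl[OF io_simple_pathD(1)[OF S]]) auto
  then show ?thesis using io_simple_pathD(5)[OF S] by simp
qed

lemma abs_super_simple_in_path:
  "abs_super_simple V E \<iota> n out s \<Longrightarrow> j \<in> {1..n} \<Longrightarrow> io_simple_path V E \<iota> out j S \<Longrightarrow> s \<in> set S"
  unfolding abs_super_simple_def by blast

lemma path_equiv_refl: "x \<in> K \<Longrightarrow> path_equiv E K x x"
  unfolding path_equiv_def by simp

lemma path_equiv_sym: "path_equiv E K x y \<Longrightarrow> path_equiv E K y x"
  unfolding path_equiv_def by blast

lemma path_equiv_trans: "path_equiv E K x y \<Longrightarrow> path_equiv E K y z \<Longrightarrow> path_equiv E K x z"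
  unfolding path_equiv_def by (meson rtrancl_trans)

lemma path_equiv_downstream: "path_equiv E K x y \<Longrightarrow> downstream E x y"
  unfolding path_equiv_def downstream_def using rtrancl_mono[of "E \<inter> K \<times> K" E] by blast

lemma path_equiv_C_nodes_avoiding:
  "path_equiv E (C_nodes V S) x y \<Longrightarrow> s \<in> set S \<Longrightarrow> (x, y) \<in> (avoiding E V s)\<^sup>*"
  unfolding path_equiv_def C_nodes_def
  using rtrancl_induced_mono[of "V - set S" "V - {s}" E] by blast

lemma path_equiv_transfer:
  assumes xy: "path_equiv E K x y" and cl: "{v. path_equiv E K v y} \<subseteq> K'"
  shows "path_equiv E K' x y"
proof -
  let ?R = "E \<inter> K \<times> K" and ?Cl = "{v. path_equiv E K v y}"
  have y: "y \<in> K" using xy by (simp add: path_equiv_def)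
  have within: "(a, b) \<in> (E \<inter> ?Cl \<times> ?Cl)\<^sup>*"
    if "(a, b) \<in> ?R\<^sup>*" "(b, y) \<in> ?R\<^sup>*" "(y, a) \<in> ?R\<^sup>*" for a b
    using that
    \<comment> \<open>each node of the walk is reached from y via a and reaches y via b\<close>
  proof (induction rule: converse_rtrancl_induct)
    case (step a z)
    have yz: "(y, z) \<in> ?R\<^sup>*" using step.prems(2) step.hyps(1) by (rule rtrancl_into_rtrancl)
    then have "z \<in> ?Cl" using step.hyps step.prems(1) y unfolding path_equiv_def
      by (auto intro: rtrancl_trans)
    moreover have "a \<in> ?Cl" using step.hyps step.prems y unfolding path_equiv_def
      by (auto intro: converse_rtrancl_into_rtrancl rtrancl_trans)
    ultimately show ?case
      using step.hyps(1) step.IH[OF step.prems(1) yz] by (auto intro: converse_rtrancl_into_rtrancl)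
  qed simp
  have "x \<in> K'" "y \<in> K'" using subsetD[OF cl] xy path_equiv_refl[OF y] by auto
  moreover have "(x, y) \<in> (E \<inter> ?Cl \<times> ?Cl)\<^sup>*" "(y, x) \<in> (E \<inter> ?Cl \<times> ?Cl)\<^sup>*"
    using within xy unfolding path_equiv_def by auto
  then have "(x, y) \<in> (E \<inter> K' \<times> K')\<^sup>*" "(y, x) \<in> (E \<inter> K' \<times> K')\<^sup>*"
    using rtrancl_induced_mono[OF cl] by auto
  ultimately show ?thesis unfolding path_equiv_def[of E K'] by blast
qed

lemma path_equiv_leaves_component:
  assumes "path_equiv E K y x" "y \<notin> {z. path_equiv E A x z}"
  obtains \<tau> where "path_equiv E K \<tau> x" "\<tau> \<notin> A"
proof -
  have "\<not> {v. path_equiv E K v x} \<subseteq> A"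
    using path_equiv_transfer[OF assms(1), of A] path_equiv_sym[of E A y x] assms(2) by auto
  then show ?thesis using that by blast
qed

lemma not_abs_appendage_imp_input_simple:
  assumes "v \<in> V" "\<forall>j\<in>{1..n}. downstream E (\<iota> j) v" "\<not> abs_appendage V E \<iota> n out v"
  shows "\<exists>j\<in>{1..n}. input_simple V E \<iota> out j v"
  using assms unfolding abs_appendage_def input_appendage_def by auto

lemma abs_appendage_downstream:
  "abs_appendage V E \<iota> n out v \<Longrightarrow> j \<in> {1..n} \<Longrightarrow> downstream E (\<iota> j) v"
  unfolding abs_appendage_def input_appendage_def by blast

locale io_net =
  fixes V :: "'v set" and E :: "('v \<times> 'v) set" and \<iota> :: "nat \<Rightarrow> 'v" and n :: nat and out :: 'v
  assumes io_network: "io_network V E \<iota> n out"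
begin

definition dominates :: "'v \<Rightarrow> 'v \<Rightarrow> bool" where
  "dominates s v \<longleftrightarrow> (\<forall>j\<in>{1..n}. (\<iota> j, v) \<notin> (avoiding E V s)\<^sup>*)"

definition postdominates :: "'v \<Rightarrow> 'v \<Rightarrow> bool" where
  "postdominates t v \<longleftrightarrow> (v, out) \<notin> (avoiding E V t)\<^sup>*"

lemma abs_super_simple_unavoidable:
  assumes "abs_super_simple V E \<iota> n out s" "j \<in> {1..n}"
  shows "(\<iota> j, out) \<notin> (avoiding E V s)\<^sup>*"
proof
  assume walk: "(\<iota> j, out) \<in> (avoiding E V s)\<^sup>*"
  have "\<iota> j \<noteq> out" using io_network assms(2) unfolding io_network_def by force
  then have "out \<in> V - {s}" using walk by (auto elim: rtranclE)
  then obtain S where "simple_path V E S" "hd S = \<iota> j" "last S = out" "set S \<subseteq> V - {s}"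
    using rtrancl_imp_simple_path[OF walk] by blast
  then show False
    using abs_super_simple_in_path[OF assms] unfolding io_simple_path_def by blast
qed

lemma abs_super_simple_prefix_suffix_disjoint:
  assumes s: "abs_super_simple V E \<iota> n out s" and j: "j \<in> {1..n}"
    and Q: "io_simple_path V E \<iota> out j Q" "i < length Q" "Q ! i = s"
    and R: "io_simple_path V E \<iota> out k R" "a < length R" "R ! a = s"
  shows "set (take i Q) \<inter> set (drop a R) = {}"
proof (rule ccontr)
  assume "\<not> ?thesis"
  then obtain u where u: "u \<in> set (take i Q)" "u \<in> set (drop a R)" by blast
  obtain c where c: "c < i" "Q ! c = u" using u(1) Q(2) by (auto simp: in_set_conv_nth)
  obtain r where "r < length R - a" "R ! (a + r) = u"
    using u(2) R(2) by (auto simp: in_set_conv_nth)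
  then obtain d where d: "a \<le> d" "d < length R" "R ! d = u"
    by (metis le_add1 less_diff_conv add.commute)
  have "c < length Q" "c \<noteq> i" using c(1) Q(2) by linarith+
  then have "Q ! c \<noteq> Q ! i"
    using nth_eq_iff_index_eq[OF io_simple_pathD(2)[OF Q(1)] _ Q(2), of c] by simp
  then have "a \<noteq> d" using c(2) d(3) Q(3) R(3) by auto
  then have "a < d" using d(1) by simp
  then have "(\<iota> j, out) \<in> (avoiding E V s)\<^sup>*"
    using io_simple_path_prefix_avoiding[OF Q c(1)]
      io_simple_path_suffix_avoiding[OF R(1) _ d(2) R(3)] c(2) d(3)
    by (metis rtrancl_trans)
  then show False using abs_super_simple_unavoidable[OF s j] by blast
qed

lemma io_simple_path_splice:
  assumes s: "abs_super_simple V E \<iota> n out s" and j: "j \<in> {1..n}"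
    and Q: "io_simple_path V E \<iota> out j Q" "i < length Q" "Q ! i = s"
    and R: "io_simple_path V E \<iota> out k R" "a < length R" "R ! a = s"
  shows "io_simple_path V E \<iota> out j (take i Q @ drop a R)"
proof -
  have "is_path V E (take i Q @ drop a R)"
    using is_path_splice[OF io_simple_pathD(1)[OF Q(1)] Q(2) io_simple_pathD(1)[OF R(1)] R(2)] Q(3) R(3)
    by simp
  moreover have "hd (take i Q @ drop a R) = \<iota> j"
    using Q R io_simple_pathD(4)[OF Q(1)]
    by (cases "i = 0") (auto simp: hd_append hd_drop_conv_nth io_simple_path_def)
  moreover have "last (take i Q @ drop a R) = out"
    using R unfolding io_simple_path_def by simp
  moreover have "distinct (take i Q @ drop a R)"
    using abs_super_simple_prefix_suffix_disjoint[OF s j Q R]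
      io_simple_pathD(2)[OF Q(1)] io_simple_pathD(2)[OF R(1)] by simp
  ultimately show ?thesis unfolding io_simple_path_def simple_path_def by blast
qed

lemma dominates_path_equiv_iff:
  assumes "path_equiv E (C_nodes V S) v w" "s \<in> set S"
  shows "dominates s v \<longleftrightarrow> dominates s w"
  using path_equiv_C_nodes_avoiding[OF assms]
    path_equiv_C_nodes_avoiding[OF path_equiv_sym[OF assms(1)] assms(2)]
  unfolding dominates_def by (meson rtrancl_trans)

lemma postdominates_path_equiv_iff:
  assumes "path_equiv E (C_nodes V S) v w" "t \<in> set S"
  shows "postdominates t v \<longleftrightarrow> postdominates t w"
  using path_equiv_C_nodes_avoiding[OF assms]
    path_equiv_C_nodes_avoiding[OF path_equiv_sym[OF assms(1)] assms(2)]
  unfolding postdominates_def by (meson rtrancl_trans)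

lemma between_dominates:
  assumes s: "abs_super_simple V E \<iota> n out s" and t: "abs_super_simple V E \<iota> n out t"
    and "between V E \<iota> n out s t v"
  shows "dominates s v" "postdominates t v"
proof -
  obtain k S a c l where k: "k \<in> {1..n}" and S: "io_simple_path V E \<iota> out k S"
    and "a < c" "c < l" "l < length S" "S ! a = s" "S ! c = v" "S ! l = t"
    using assms(3) unfolding between_def by blast
  then have "(v, out) \<in> (avoiding E V s)\<^sup>*" "(\<iota> k, v) \<in> (avoiding E V t)\<^sup>*"
    using io_simple_path_suffix_avoiding[OF S, of a c]
      io_simple_path_prefix_avoiding[OF S, of l t c]
    by auto
  then show "dominates s v" "postdominates t v"
    using abs_super_simple_unavoidable[OF s] abs_super_simple_unavoidable[OF t k]
    unfolding dominates_def postdominates_def by (meson rtrancl_trans)+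
qed

end

locale core_net = io_net +
  assumes reaches_output: "v \<in> V \<Longrightarrow> downstream E v out"
begin

lemma io_simple_path_exists:
  assumes "j \<in> {1..n}"
  obtains S where "io_simple_path V E \<iota> out j S"
proof -
  have "\<iota> j \<in> V" "out \<in> V" "E \<inter> V \<times> V = E" using io_network assms unfolding io_network_def by auto
  then have "(\<iota> j, out) \<in> (E \<inter> V \<times> V)\<^sup>*" using reaches_output unfolding downstream_def by simp
  then show ?thesis
    using rtrancl_imp_simple_path[of _ out E V V] that \<open>out \<in> V\<close>
    unfolding io_simple_path_def by blast
qed

lemma abs_simple_after_super_simple:
  assumes s: "abs_super_simple V E \<iota> n out s"
    and R: "io_simple_path V E \<iota> out k R" "a < length R" "R ! a = s" and "a \<le> c" "c < length R"
  shows "abs_simple V E \<iota> n out (R ! c)"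
  unfolding abs_simple_def input_simple_def
proof
  fix j assume j: "j \<in> {1..n}"
  obtain Q where Q: "io_simple_path V E \<iota> out j Q" using io_simple_path_exists[OF j] .
  obtain i where i: "i < length Q" "Q ! i = s"
    using abs_super_simple_in_path[OF s j Q] by (auto simp: in_set_conv_nth)
  have "R ! c \<in> set (drop a R)" using assms(5,6) nth_mem[of "c - a" "drop a R"] by simp
  then show "\<exists>S. io_simple_path V E \<iota> out j S \<and> R ! c \<in> set S"
    using io_simple_path_splice[OF s j Q i R] by auto
qed

lemma dominated_postdominated_between:
  assumes s: "abs_super_simple V E \<iota> n out s" and t: "abs_super_simple V E \<iota> n out t"
    and "v \<in> V" "\<forall>j\<in>{1..n}. downstream E (\<iota> j) v" "\<not> abs_appendage V E \<iota> n out v"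
    and "v \<noteq> s" "v \<noteq> t" "dominates s v" "postdominates t v"
  shows "between V E \<iota> n out s t v"
proof -
  obtain k R where k: "k \<in> {1..n}" and R: "io_simple_path V E \<iota> out k R" "v \<in> set R"
    using not_abs_appendage_imp_input_simple[OF assms(3-5)] unfolding input_simple_def by blast
  obtain c where c: "c < length R" "R ! c = v" using R(2) by (auto simp: in_set_conv_nth)
  obtain a where a: "a < length R" "R ! a = s"
    using abs_super_simple_in_path[OF s k R(1)] by (auto simp: in_set_conv_nth)
  obtain l where l: "l < length R" "R ! l = t"
    using abs_super_simple_in_path[OF t k R(1)] by (auto simp: in_set_conv_nth)
  have "a < c"
  proof (rule ccontr)
    assume "\<not> a < c"
    then have "c < a" using a c \<open>v \<noteq> s\<close> by (metis nat_neq_iff)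
    then show False
      using io_simple_path_prefix_avoiding[OF R(1) a \<open>c < a\<close>] c k \<open>dominates s v\<close>
      unfolding dominates_def by auto
  qed
  moreover have "c < l"
  proof (rule ccontr)
    assume "\<not> c < l"
    then have "l < c" using l c \<open>v \<noteq> t\<close> by (metis nat_neq_iff)
    then show False
      using io_simple_path_suffix_avoiding[OF R(1) \<open>l < c\<close> c(1) l(2)] c \<open>postdominates t v\<close>
      unfolding postdominates_def by auto
  qed
  moreover have "abs_simple V E \<iota> n out v"
    using abs_simple_after_super_simple[OF s R(1) a, of c] \<open>a < c\<close> c by simp
  ultimately show ?thesis unfolding between_def using k R(1) a c l by blast
qed

lemma path_equiv_dominated_in_L_nodes:
  assumes s: "abs_super_simple V E \<iota> n out s" and t: "abs_super_simple V E \<iota> n out t"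
    and m: "m \<in> {1..n}" and S: "io_simple_path V E \<iota> out m S"
    and vw: "path_equiv E (C_nodes V S) v w" and "dominates s w" "postdominates t w"
    and "\<forall>j\<in>{1..n}. downstream E (\<iota> j) w" and "\<not> abs_appendage V E \<iota> n out v"
  shows "abs_simple V E \<iota> n out v \<and> v \<in> L_nodes V E \<iota> n out s t \<and> \<not> abs_super_simple V E \<iota> n out v"
proof -
  have st: "s \<in> set S" "t \<in> set S" using abs_super_simple_in_path[OF _ m S] s t by blast+
  have "dominates s v" "postdominates t v"
    using assms(6,7) dominates_path_equiv_iff[OF vw st(1)] postdominates_path_equiv_iff[OF vw st(2)]
    by auto
  moreover have "\<forall>j\<in>{1..n}. downstream E (\<iota> j) v"
    using assms(8) path_equiv_downstream[OF path_equiv_sym[OF vw]] unfolding downstream_def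
    by (meson rtrancl_trans)
  moreover have "v \<in> V" "v \<notin> set S" using vw unfolding path_equiv_def C_nodes_def by auto
  ultimately have "between V E \<iota> n out s t v"
    using dominated_postdominated_between[OF s t] st assms(9) by blast
  then show ?thesis
    using \<open>v \<notin> set S\<close> abs_super_simple_in_path[OF _ m S]
    unfolding L_nodes_def between_def by blast
qed

lemma io_simple_path_keeping_dominated_class:
  assumes s: "abs_super_simple V E \<iota> n out s" and m: "m \<in> {1..n}"
    and S: "io_simple_path V E \<iota> out m S" and w: "w \<in> C_nodes V S" "dominates s w"
    and j: "j \<in> {1..n}"
  obtains S' where "io_simple_path V E \<iota> out j S'" "w \<in> C_nodes V S'"
    "\<And>v. path_equiv E (C_nodes V S) v w \<Longrightarrow> path_equiv E (C_nodes V S') v w"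
proof -
  obtain Q where Q: "io_simple_path V E \<iota> out j Q" using io_simple_path_exists[OF j] .
  obtain i where i: "i < length Q" "Q ! i = s"
    using abs_super_simple_in_path[OF s j Q] by (auto simp: in_set_conv_nth)
  obtain a where a: "a < length S" "S ! a = s"
    using abs_super_simple_in_path[OF s m S] by (auto simp: in_set_conv_nth)
  have cl: "{v. path_equiv E (C_nodes V S) v w} \<subseteq> C_nodes V (take i Q @ drop a S)"
  proof
    fix v assume "v \<in> {v. path_equiv E (C_nodes V S) v w}"
    then have vw: "path_equiv E (C_nodes V S) v w" by simp
    have "v \<notin> set (take i Q)"
    proof
      assume "v \<in> set (take i Q)"
      then obtain c where "c < i" "Q ! c = v" using i(1) by (auto simp: in_set_conv_nth)
      then have "(\<iota> j, v) \<in> (avoiding E V s)\<^sup>*"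
        using io_simple_path_prefix_avoiding[OF Q i] by blast
      moreover have "(v, w) \<in> (avoiding E V s)\<^sup>*"
        using path_equiv_C_nodes_avoiding[OF vw] a nth_mem by blast
      ultimately show False using w(2) j unfolding dominates_def by (meson rtrancl_trans)
    qed
    moreover have "v \<in> V" "v \<notin> set S" using vw unfolding path_equiv_def C_nodes_def by auto
    ultimately show "v \<in> C_nodes V (take i Q @ drop a S)"
      unfolding C_nodes_def using set_drop_subset[of a S] by auto
  qed
  show ?thesis
  proof (rule that[OF io_simple_path_splice[OF s j Q i S a]])
    show "w \<in> C_nodes V (take i Q @ drop a S)"
      using w(1) by (intro subsetD[OF cl]) (simp add: path_equiv_refl)
  qed (rule path_equiv_transfer[OF _ cl])
qed

lemma leaving_component_between:
  assumes s: "abs_super_simple V E \<iota> n out s" and t: "abs_super_simple V E \<iota> n out t"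
    and m: "m \<in> {1..n}" and S: "io_simple_path V E \<iota> out m S"
    and B: "B = {z. path_equiv E (A_nodes V E \<iota> n out) x z}"
    and x: "abs_appendage V E \<iota> n out x" "dominates s x" "postdominates t x"
    and y: "y \<notin> B" "\<forall>x'\<in>B. path_equiv E (C_nodes V S) x' y"
  obtains \<tau> where "abs_simple V E \<iota> n out \<tau>" "between V E \<iota> n out s t \<tau>"
    "\<forall>x'\<in>B. path_equiv E (C_nodes V S) x' \<tau>"
proof -
  have "x \<in> B" using B x(1) path_equiv_refl[of x _ E] by (simp add: A_nodes_def)
  then have yx: "path_equiv E (C_nodes V S) y x" using y(2) by (auto intro: path_equiv_sym)
  obtain \<tau> where \<tau>: "path_equiv E (C_nodes V S) \<tau> x" "\<tau> \<notin> A_nodes V E \<iota> n out"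
    using path_equiv_leaves_component[OF yx] y(1) B by blast
  then have "abs_simple V E \<iota> n out \<tau> \<and> \<tau> \<in> L_nodes V E \<iota> n out s t"
    using path_equiv_dominated_in_L_nodes[OF s t m S \<tau>(1) x(2,3)] abs_appendage_downstream[OF x(1)]
    unfolding A_nodes_def by blast
  moreover have "\<forall>x'\<in>B. path_equiv E (C_nodes V S) x' \<tau>"
    using y(2) path_equiv_trans[OF path_equiv_trans[OF _ yx] path_equiv_sym[OF \<tau>(1)]] by blast
  ultimately show ?thesis using that unfolding L_nodes_def by blast
qed

end

theorem lemma3p22:
  fixes V :: "'v set" and E :: "('v \<times> 'v) set" and \<iota> :: "nat \<Rightarrow> 'v"
    and n :: nat and out :: 'v and \<rho>k \<rho>k1 \<rho> :: 'v and B :: "'v set"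
    and m :: nat and Sm :: "'v list"
  assumes core: "core_network V E \<iota> n out"
    and adj: "adjacent_ss V E \<iota> n out \<rho>k \<rho>k1"
    and Bcomp: "path_component E (A_nodes V E \<iota> n out) B"
    and m: "m \<in> {1..n}"
    and Sm: "io_simple_path V E \<iota> out m Sm"
    and \<rho>out: "\<rho> \<in> C_nodes V Sm - B"
    and \<rho>simple: "abs_simple V E \<iota> n out \<rho>"
    and \<rho>L: "\<rho> \<in> L_nodes V E \<iota> n out \<rho>k \<rho>k1"
    and Beq: "\<forall>x\<in>B. path_equiv E (C_nodes V Sm) x \<rho>"
  shows
    "(\<forall>\<nu>\<in>C_nodes V Sm - B.
        (\<forall>x\<in>B. path_equiv E (C_nodes V Sm) x \<nu>) \<and> \<not> abs_appendage V E \<iota> n out \<nu> \<longrightarrow>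
          abs_simple V E \<iota> n out \<nu> \<and> \<nu> \<in> L_nodes V E \<iota> n out \<rho>k \<rho>k1 \<and>
          \<not> abs_super_simple V E \<iota> n out \<nu>)
     \<and> (\<forall>j\<in>{1..n}. \<exists>Sj. io_simple_path V E \<iota> out j Sj \<and> \<rho> \<in> C_nodes V Sj - B \<and>
          (\<forall>x\<in>B. path_equiv E (C_nodes V Sj) x \<rho>))
     \<and> (\<forall>St. io_simple_path V E \<iota> out m St \<longrightarrow>
          (\<exists>y\<in>C_nodes V St - B. \<forall>x\<in>B. path_equiv E (C_nodes V St) x y) \<longrightarrow>
          (\<exists>\<tau>. abs_simple V E \<iota> n out \<tau> \<and> between V E \<iota> n out \<rho>k \<rho>k1 \<tau> \<and>
               (\<forall>x\<in>B. path_equiv E (C_nodes V St) x \<tau>)))"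
proof -
  \<comment> \<open>adjacency of \<rho>k and \<rho>k1 is used only through their super-simplicity,
     and \<rho>simple follows from \<rho>L\<close>
  interpret core_net V E \<iota> n out
    using core unfolding core_network_def by unfold_locales auto
  have s: "abs_super_simple V E \<iota> n out \<rho>k" and t: "abs_super_simple V E \<iota> n out \<rho>k1"
    using adj unfolding adjacent_ss_def by blast+
  have \<rho>_dom: "dominates \<rho>k \<rho>" "postdominates \<rho>k1 \<rho>"
    using between_dominates[OF s t] \<rho>L unfolding L_nodes_def by auto
  obtain x where x: "abs_appendage V E \<iota> n out x"
    and B: "B = {z. path_equiv E (A_nodes V E \<iota> n out) x z}"
    using Bcomp unfolding path_component_def A_nodes_def by auto
  have "x \<in> B" using x B path_equiv_refl[of x _ E] by (simp add: A_nodes_def)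
  then have x\<rho>: "path_equiv E (C_nodes V Sm) x \<rho>" using Beq by blast
  have x_dom: "dominates \<rho>k x" "postdominates \<rho>k1 x"
    using \<rho>_dom dominates_path_equiv_iff[OF x\<rho> abs_super_simple_in_path[OF s m Sm]]
      postdominates_path_equiv_iff[OF x\<rho> abs_super_simple_in_path[OF t m Sm]] by simp_all
  show ?thesis
  proof (intro conjI; intro ballI allI impI)
    fix \<nu> assume "\<nu> \<in> C_nodes V Sm - B"
      and \<nu>: "(\<forall>x\<in>B. path_equiv E (C_nodes V Sm) x \<nu>) \<and> \<not> abs_appendage V E \<iota> n out \<nu>"
    then have "path_equiv E (C_nodes V Sm) \<nu> x" using \<open>x \<in> B\<close> by (auto intro: path_equiv_sym)
    then show "abs_simple V E \<iota> n out \<nu> \<and> \<nu> \<in> L_nodes V E \<iota> n out \<rho>k \<rho>k1 \<and>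
        \<not> abs_super_simple V E \<iota> n out \<nu>"
      using path_equiv_dominated_in_L_nodes[OF s t m Sm _ x_dom] abs_appendage_downstream[OF x] \<nu>
      by blast
  next
    fix j assume "j \<in> {1..n}"
    then obtain Sj where "io_simple_path V E \<iota> out j Sj" "\<rho> \<in> C_nodes V Sj"
      "\<And>v. path_equiv E (C_nodes V Sm) v \<rho> \<Longrightarrow> path_equiv E (C_nodes V Sj) v \<rho>"
      using io_simple_path_keeping_dominated_class[OF s m Sm _ \<rho>_dom(1)] \<rho>out by blast
    then show "\<exists>Sj. io_simple_path V E \<iota> out j Sj \<and> \<rho> \<in> C_nodes V Sj - B \<and>
        (\<forall>x\<in>B. path_equiv E (C_nodes V Sj) x \<rho>)"
      using \<rho>out Beq by blast
  next
    fix St assume "io_simple_path V E \<iota> out m St"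
      and "\<exists>y\<in>C_nodes V St - B. \<forall>x\<in>B. path_equiv E (C_nodes V St) x y"
    then show "\<exists>\<tau>. abs_simple V E \<iota> n out \<tau> \<and> between V E \<iota> n out \<rho>k \<rho>k1 \<tau> \<and>
        (\<forall>x\<in>B. path_equiv E (C_nodes V St) x \<tau>)"
      using leaving_component_between[OF s t m _ B x x_dom] by (metis DiffD2)
  qed
qed

end
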